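(* Let $G$ be a group and $\mathcal{S}$ a 2-complex with vertices in $G$ such that $\mathcal{C}=Sc[\mathcal{S},G]$ is a commutative triplet structure. For every vertex $v\in G\times\mathcal{T}$, the map $E$ restricts to a bijection from the neighbor set $\Gamma_{G_{zig}}(v)$ onto the neighbor set $\Gamma_{G_{walk}(\mathcal{C})}(E(v))$.
   Context: For a 2-complex $X$, $X(1)$ is the set of 2-sets in triangles; $G_{walk}(X)$ is the graph on $X(1)$ with distinct edges adjacent iff they lie in a common triangle. For $\sigma\subseteq G$, $\sigma\cdot g=\{sg:s\in\sigma\}$; $Sc[\mathcal{S},G]=\{\sigma\cdot g\}$. $\mathcal{T}=\mathcal{S}(1)$, $\mathcal{T}_o$ = ordered pairs $(t_1,t_2)$ with $\{t_1,t_2\}\in\mathcal{T}$. Commutative triplet structure: (0) $\{s,s^{-1}\}\notin\mathcal{T}$ for every vertex $s$; (A) every edge of $\mathcal{T}$ lies in exactly $\tilde d$ triangles of $\mathcal{S}$; (B) $ab=ba$ for $\{a,b\}\in\mathcal{T}$; (C) $\{a,b\}\in\mathcal{T}\iff\{a^{-1},b^{-1}\}\in\mathcal{T}$; (D) for $t\ne t'\in\mathcal{T}_o$, $t_1t_2^{-1}=t'_1(t'_2)^{-1}$ implies $t'_2=t_1^{-1}$, $t'_1=t_2^{-1}$; (E) the 1-skeleton of $\mathcal{S}$ is connected. For $\tau=\{a,b\}$: $E(g,\tau)=\{ag,bg\}$, $\hat\tau g=abg$, $\tau^{-1}=\{a^{-1},b^{-1}\}$. $L=G_{walk}(\mathcal{S})$.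 On $G\times\mathcal{T}$, red edges join $(g,\tau)$ and $(g,\tau')$ when $\tau\sim\tau'$ in $L$; the blue edge joins $(g,\tau)$ and $(\hat\tau g,\tau^{-1})$. $G_{zig}$ is the graph on $G\times\mathcal{T}$ induced by the operator $\tfrac12P_R+\tfrac12P_RP_B$ ($P_R,P_B$ the normalized red/blue adjacency matrices): the neighbors of $v$ are its red neighbors and the red neighbors of its blue neighbor. *)

theory Defs
  imports Main
begin

text \<open>The group G is a (not necessarily commutative) type of class group_add;
  the group product a b is written a + b and the inverse a^{-1} as - a.\<close>

definition two_complex :: "'a set set \<Rightarrow> bool" where
  "two_complex X \<longleftrightarrow> (\<forall>\<sigma>\<in>X. \<sigma> \<noteq> {} \<and> finite \<sigma> \<and> card \<sigma> \<le> 3 \<and>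
      (\<forall>\<tau>. \<tau> \<noteq> {} \<longrightarrow> \<tau> \<subseteq> \<sigma> \<longrightarrow> \<tau> \<in> X))"

definition triangles :: "'a set set \<Rightarrow> 'a set set" where
  "triangles X = {\<sigma> \<in> X. card \<sigma> = 3}"

definition edges1 :: "'a set set \<Rightarrow> 'a set set" where
  "edges1 X = {e. card e = 2 \<and> (\<exists>t\<in>triangles X. e \<subseteq> t)}"

definition walk_adj :: "'a set set \<Rightarrow> 'a set \<Rightarrow> 'a set \<Rightarrow> bool" where
  "walk_adj X e e' \<longleftrightarrow> e \<in> edges1 X \<and> e' \<in> edges1 X \<and> e \<noteq> e' \<and>
      (\<exists>t\<in>triangles X. e \<union> e' \<subseteq> t)"

definition walk_nbrs :: "'a set set \<Rightarrow> 'a set \<Rightarrow> 'a set set" where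
  "walk_nbrs X e = {e'. walk_adj X e e'}"

definition rtrans :: "'a::group_add set \<Rightarrow> 'a \<Rightarrow> 'a set" where
  "rtrans \<sigma> g = (\<lambda>s. s + g) ` \<sigma>"

definition Sc :: "'a::group_add set set \<Rightarrow> 'a set set" where
  "Sc S = {rtrans \<sigma> g | \<sigma> g. \<sigma> \<in> S}"

definition Tord :: "'a set set \<Rightarrow> ('a \<times> 'a) set" where
  "Tord S = {(a, b). {a, b} \<in> edges1 S}"

definition skeleton_connected :: "'a set set \<Rightarrow> bool" where
  "skeleton_connected S \<longleftrightarrow>
     (\<forall>x y. {x} \<in> S \<longrightarrow> {y} \<in> S \<longrightarrow> (x, y) \<in> {(u, w). {u, w} \<in> S \<and> u \<noteq> w}\<^sup>*)"

definition comm_triplet :: "'a::group_add set set \<Rightarrow> nat \<Rightarrow> bool" where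
  "comm_triplet S d \<longleftrightarrow>
     (\<forall>s. {s} \<in> S \<longrightarrow> {s, - s} \<notin> edges1 S) \<and>
     (\<forall>e\<in>edges1 S. finite {t\<in>triangles S. e \<subseteq> t} \<and> card {t\<in>triangles S. e \<subseteq> t} = d) \<and>
     (\<forall>a b. {a, b} \<in> edges1 S \<longrightarrow> a + b = b + a) \<and>
     (\<forall>a b. {a, b} \<in> edges1 S \<longleftrightarrow> {- a, - b} \<in> edges1 S) \<and>
     (\<forall>t\<in>Tord S. \<forall>t'\<in>Tord S. t \<noteq> t' \<longrightarrow> fst t + - snd t = fst t' + - snd t' \<longrightarrow>
         snd t' = - fst t \<and> fst t' = - snd t) \<and>
     skeleton_connected S"

definition Emap :: "'a::group_add \<times> 'a set \<Rightarrow> 'a set" where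
  "Emap v = rtrans (snd v) (fst v)"

definition red :: "'a set set \<Rightarrow> 'a \<times> 'a set \<Rightarrow> 'a \<times> 'a set \<Rightarrow> bool" where
  "red S v w \<longleftrightarrow> fst w = fst v \<and> walk_adj S (snd v) (snd w)"

definition blue :: "'a::group_add set set \<Rightarrow> 'a \<times> 'a set \<Rightarrow> 'a \<times> 'a set \<Rightarrow> bool" where
  "blue S v w \<longleftrightarrow> snd v \<in> edges1 S \<and>
     (\<exists>a b. snd v = {a, b} \<and> a \<noteq> b \<and> w = (a + b + fst v, {- a, - b}))"

definition zig_nbrs :: "'a::group_add set set \<Rightarrow> 'a \<times> 'a set \<Rightarrow> ('a \<times> 'a set) set" where
  "zig_nbrs S v = {w. red S v w} \<union> {w. \<exists>u. blue S v u \<and> red S u w}"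

end

theory Submission
  imports Defs
begin

text \<open>A vertex \<open>(g, {a, b})\<close> and its blue partner \<open>(a b g, {a\<inverse>, b\<inverse>})\<close> have the
  same image \<open>{a g, b g}\<close> under E, and by (D) these are the only two vertices with that
  image. Every walk neighbour of \<open>{a g, b g}\<close> in \<open>Sc[S, G]\<close> is the translate of a walk
  neighbour in S of one of these two representatives, which gives surjectivity. For
  injectivity, the only possible collision is between a red neighbour \<open>(g, {x, y})\<close> of the
  vertex and a red neighbour of its partner, and it forces \<open>x y = a b\<close>; since \<open>{x, y}\<close> and
  \<open>{a, b}\<close> lie in a common triangle they share an element, and then \<open>{x, y} = {a, b}\<close>.\<close>

lemma Int_not_empty_if_card_sum_gt:
  assumes "finite C" "A \<subseteq> C" "B \<subseteq> C" "card C < card A + card B"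
  shows "A \<inter> B \<noteq> {}"
proof
  assume "A \<inter> B = {}"
  moreover have "finite A" "finite B"
    using assms(1-3) finite_subset by auto
  ultimately have "card (A \<union> B) = card A + card B"
    by (simp add: card_Un_disjoint)
  moreover have "card (A \<union> B) \<le> card C"
    using assms(1-3) by (simp add: card_mono)
  ultimately show False
    using assms(4) by simp
qed

lemma doubleton_eq_if_add_eq:
  fixes a b x y :: "'a::cancel_semigroup_add"
  assumes "a + b = b + a" "x + y = a + b" "{x, y} \<inter> {a, b} \<noteq> {}"
  shows "{x, y} = {a, b}"
proof -
  have "x = a \<or> x = b \<or> y = a \<or> y = b"
    using assms(3) by auto
  then show ?thesis
    using assms(1,2) by (elim disjE) (metis add_left_cancel add_right_cancel insert_commute)+
qed

lemma rtrans_rtrans: "rtrans (rtrans A g) h = rtrans A (g + h)"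
  unfolding rtrans_def image_image by (simp add: add.assoc)

lemma rtrans_0 [simp]: "rtrans A 0 = A"
  unfolding rtrans_def by simp

lemma rtrans_minus [simp]: "rtrans (rtrans A g) (- g) = A"
  by (simp add: rtrans_rtrans)

lemma rtrans_minus' [simp]: "rtrans (rtrans A (- g)) g = A"
  by (simp add: rtrans_rtrans)

lemma rtrans_eq_iff [simp]: "rtrans A g = rtrans B g \<longleftrightarrow> A = B"
  by (metis rtrans_minus)

lemma rtrans_subset_iff [simp]: "rtrans A g \<subseteq> rtrans B g \<longleftrightarrow> A \<subseteq> B"
  unfolding rtrans_def by (rule inj_image_subset_iff) (simp add: inj_on_def)

lemma rtrans_insert [simp]: "rtrans (insert x A) g = insert (x + g) (rtrans A g)"
  and rtrans_empty [simp]: "rtrans {} g = {}"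
  by (simp_all add: rtrans_def)

lemma rtrans_Un: "rtrans (A \<union> B) g = rtrans A g \<union> rtrans B g"
  unfolding rtrans_def by auto

lemma card_rtrans [simp]: "card (rtrans A g) = card A"
  unfolding rtrans_def by (rule card_image) (simp add: inj_on_def)

lemma edges1E:
  assumes "e \<in> edges1 X"
  obtains a b where "e = {a, b}" "a \<noteq> b"
  using assms unfolding edges1_def by (auto simp: card_2_iff)

lemma walk_adj_Int_not_empty:
  assumes "walk_adj S A B"
  shows "A \<inter> B \<noteq> {}"
proof -
  obtain t where "t \<in> triangles S" "A \<union> B \<subseteq> t" "card A = 2" "card B = 2"
    using assms unfolding walk_adj_def edges1_def by blast
  then show ?thesis
    unfolding triangles_def by (intro Int_not_empty_if_card_sum_gt[of t]) (auto intro: card_ge_0_finite)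
qed

lemma triangles_Sc_iff:
  "T \<in> triangles (Sc S) \<longleftrightarrow> (\<exists>\<sigma> h. \<sigma> \<in> triangles S \<and> T = rtrans \<sigma> h)"
  unfolding triangles_def Sc_def by auto

lemma walk_adj_Sc_iff:
  "walk_adj (Sc S) e e' \<longleftrightarrow> (\<exists>h A B. walk_adj S A B \<and> e = rtrans A h \<and> e' = rtrans B h)"
proof
  assume "walk_adj (Sc S) e e'"
  then obtain T where T: "T \<in> triangles (Sc S)" "e \<union> e' \<subseteq> T"
    and card: "card e = 2" "card e' = 2" and "e \<noteq> e'"
    unfolding walk_adj_def edges1_def by blast
  obtain \<sigma> h where \<sigma>: "\<sigma> \<in> triangles S" "T = rtrans \<sigma> h"
    using T(1) triangles_Sc_iff by blast
  let ?A = "rtrans e (- h)" and ?B = "rtrans e' (- h)"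
  have "rtrans (?A \<union> ?B) h \<subseteq> rtrans \<sigma> h"
    using T(2) \<sigma>(2) by (simp add: rtrans_Un)
  then have "?A \<union> ?B \<subseteq> \<sigma>"
    by (simp only: rtrans_subset_iff)
  with \<sigma>(1) card \<open>e \<noteq> e'\<close> have "walk_adj S ?A ?B"
    unfolding walk_adj_def edges1_def by auto
  then show "\<exists>h A B. walk_adj S A B \<and> e = rtrans A h \<and> e' = rtrans B h"
    by (metis rtrans_minus')
next
  assume "\<exists>h A B. walk_adj S A B \<and> e = rtrans A h \<and> e' = rtrans B h"
  then obtain h A B \<sigma> where e: "e = rtrans A h" "e' = rtrans B h"
    and AB: "A \<in> edges1 S" "B \<in> edges1 S" "A \<noteq> B" and \<sigma>: "\<sigma> \<in> triangles S" "A \<union> B \<subseteq> \<sigma>"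
    unfolding walk_adj_def by blast
  have tri: "rtrans \<sigma> h \<in> triangles (Sc S)"
    using \<sigma>(1) triangles_Sc_iff by blast
  have sub: "e \<union> e' \<subseteq> rtrans \<sigma> h"
    using \<sigma>(2) e by (simp flip: rtrans_Un)
  have "card e = 2" "card e' = 2" "e \<noteq> e'"
    using AB e unfolding edges1_def by auto
  with tri sub show "walk_adj (Sc S) e e'"
    unfolding walk_adj_def edges1_def by blast
qed

lemma walk_nbrs_Sc_Emap:
  "walk_nbrs (Sc S) (Emap v) = Emap ` {w. \<exists>u. Emap u = Emap v \<and> red S u w}"
  unfolding walk_nbrs_def walk_adj_Sc_iff red_def Emap_def
  by (auto simp: image_iff) (metis fst_conv snd_conv)

lemma red_edges1: "red S u w \<Longrightarrow> snd u \<in> edges1 S" "red S u w \<Longrightarrow> snd w \<in> edges1 S"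
  and red_fst: "red S u w \<Longrightarrow> fst w = fst u"
  unfolding red_def walk_adj_def by simp_all

lemma comm_triplet_add_commute: "comm_triplet S d \<Longrightarrow> {a, b} \<in> edges1 S \<Longrightarrow> a + b = b + a"
  unfolding comm_triplet_def by blast

lemma comm_triplet_uminus_edge: "comm_triplet S d \<Longrightarrow> {a, b} \<in> edges1 S \<Longrightarrow> {- a, - b} \<in> edges1 S"
  unfolding comm_triplet_def by blast

lemma comm_triplet_add_neq_0:
  assumes "two_complex S" "comm_triplet S d" "{a, b} \<in> edges1 S"
  shows "a + b \<noteq> 0"
proof
  assume "a + b = 0"
  then have "b = - a"
    using minus_add_cancel[of a b] by simp
  moreover obtain t where "t \<in> triangles S" "{a, b} \<subseteq> t"
    using assms(3) unfolding edges1_def by blast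
  then have "{a} \<in> S"
    using assms(1) unfolding two_complex_def triangles_def by blast
  ultimately show False
    using assms(2,3) unfolding comm_triplet_def by blast
qed

text \<open>The ordered pairs \<open>(p, q)\<close> and \<open>(p k, q k)\<close> have the same quotient \<open>p q\<inverse>\<close>,
  so condition (D) applies to them.\<close>

lemma comm_triplet_translate_edge:
  fixes p q k :: "'a::group_add"
  assumes "comm_triplet S d" "{p, q} \<in> edges1 S" "{p + k, q + k} \<in> edges1 S" "k \<noteq> 0"
  shows "q + k = - p \<and> p + k = - q"
proof -
  have "(p, q) \<in> Tord S" "(p + k, q + k) \<in> Tord S"
    using assms(2,3) unfolding Tord_def by auto
  moreover have "(p, q) \<noteq> (p + k, q + k)"
    using assms(4) by (metis add.right_neutral add_left_cancel prod.inject)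
  moreover have "p + - q = (p + k) + - (q + k)"
    by (simp only: minus_add add.assoc add_minus_cancel)
  moreover have "\<forall>t\<in>Tord S. \<forall>t'\<in>Tord S. t \<noteq> t' \<longrightarrow> fst t + - snd t = fst t' + - snd t' \<longrightarrow>
      snd t' = - fst t \<and> fst t' = - snd t"
    using assms(1) unfolding comm_triplet_def by blast
  ultimately show ?thesis
    by (metis fst_conv snd_conv)
qed

lemma blue_iff:
  assumes "comm_triplet S d" "{a, b} \<in> edges1 S"
  shows "blue S (g, {a, b}) u \<longleftrightarrow> u = (a + b + g, {- a, - b})"
proof
  assume "blue S (g, {a, b}) u"
  then obtain a' b' where "{a, b} = {a', b'}" "u = (a' + b' + g, {- a', - b'})"
    unfolding blue_def by auto
  moreover have "a + b = b + a"
    using assms by (rule comm_triplet_add_commute)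
  ultimately show "u = (a + b + g, {- a, - b})"
    by (auto simp: doubleton_eq_iff insert_commute)
next
  assume "u = (a + b + g, {- a, - b})"
  moreover have "a \<noteq> b"
    using assms(2) unfolding edges1_def by (cases "a = b") auto
  ultimately show "blue S (g, {a, b}) u"
    using assms(2) unfolding blue_def by auto
qed

lemma blueE:
  assumes "blue S v u"
  obtains g a b where "v = (g, {a, b})" "{a, b} \<in> edges1 S" "u = (a + b + g, {- a, - b})"
  using assms unfolding blue_def by (metis prod.collapse)

lemma blue_exists:
  assumes "snd v \<in> edges1 S"
  obtains u where "blue S v u"
proof -
  obtain a b where "snd v = {a, b}" "a \<noteq> b"
    using assms by (rule edges1E)
  then have "blue S v (a + b + fst v, {- a, - b})"
    using assms unfolding blue_def by auto
  then show ?thesis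
    by (rule that)
qed

lemma blue_unique:
  assumes "comm_triplet S d" "blue S v u" "blue S v u'"
  shows "u = u'"
proof -
  obtain g a b where "v = (g, {a, b})" "{a, b} \<in> edges1 S" "u = (a + b + g, {- a, - b})"
    using assms(2) by (rule blueE)
  then show ?thesis
    using assms(1,3) by (simp add: blue_iff)
qed

lemma blue_sym:
  assumes "comm_triplet S d" "blue S v u"
  shows "blue S u v"
proof -
  obtain g a b where v: "v = (g, {a, b})" and e: "{a, b} \<in> edges1 S"
    and u: "u = (a + b + g, {- a, - b})"
    using assms(2) by (rule blueE)
  have "a + b = b + a"
    using assms(1) e by (rule comm_triplet_add_commute)
  then have "- a + - b + (a + b + g) = g"
    by (metis add.assoc minus_add_cancel)
  moreover have "{- a, - b} \<in> edges1 S"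
    using assms(1) e by (rule comm_triplet_uminus_edge)
  ultimately show ?thesis
    using assms(1) u v by (simp add: blue_iff)
qed

lemma Emap_blue:
  assumes "comm_triplet S d" "blue S v u"
  shows "Emap u = Emap v"
proof -
  obtain g a b where v: "v = (g, {a, b})" and e: "{a, b} \<in> edges1 S"
    and u: "u = (a + b + g, {- a, - b})"
    using assms(2) by (rule blueE)
  have "a + b = b + a"
    using assms(1) e by (rule comm_triplet_add_commute)
  then have "- a + (a + b + g) = b + g" "- b + (a + b + g) = a + g"
    by (metis add.assoc minus_add_cancel)+
  then show ?thesis
    using u v by (simp add: Emap_def insert_commute)
qed

lemma blue_fst_neq:
  assumes "two_complex S" "comm_triplet S d" "blue S v u"
  shows "fst u \<noteq> fst v"
proof -
  obtain g a b where v: "v = (g, {a, b})" and e: "{a, b} \<in> edges1 S"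
    and u: "u = (a + b + g, {- a, - b})"
    using assms(3) by (rule blueE)
  have "a + b \<noteq> 0"
    using assms(1,2) e by (rule comm_triplet_add_neq_0)
  then show ?thesis
    using u v by (metis add_0 add_right_cancel fst_conv)
qed

lemma Emap_eq_imp_eq_or_blue:
  assumes "comm_triplet S d" "snd v \<in> edges1 S" "snd w \<in> edges1 S" "Emap w = Emap v"
  shows "w = v \<or> blue S v w"
proof -
  obtain g \<tau> h A where v: "v = (g, \<tau>)" and w: "w = (h, A)"
    by (metis prod.exhaust)
  obtain a b where \<tau>: "\<tau> = {a, b}" "a \<noteq> b"
    using assms(2) v by (auto elim: edges1E)
  define k where "k = g + - h"
  have "rtrans A h = rtrans \<tau> g"
    using assms(4) v w by (simp add: Emap_def)
  then have "A = rtrans \<tau> k"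
    unfolding k_def by (metis rtrans_minus rtrans_rtrans)
  then have A: "A = {a + k, b + k}"
    using \<tau> by simp
  show ?thesis
  proof (cases "k = 0")
    case True
    then show ?thesis
      using A \<tau> v w by (simp add: k_def)
  next
    case False
    then have k: "b + k = - a \<and> a + k = - b"
      using comm_triplet_translate_edge[OF assms(1), of a b k] assms(2,3) A \<tau> v w by simp
    then have "a + b + g + - h = 0"
      unfolding k_def by (metis add.assoc add.right_inverse)
    then have "h = a + b + g"
      by simp
    then show ?thesis
      using A k \<tau> assms(2) v w unfolding blue_def by auto
  qed
qed

lemma zig_nbrs_eq:
  assumes "comm_triplet S d" "snd v \<in> edges1 S"
  shows "zig_nbrs S v = {w. \<exists>u. Emap u = Emap v \<and> red S u w}"
proof (intro equalityI subsetI)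
  fix w
  assume "w \<in> zig_nbrs S v"
  then show "w \<in> {w. \<exists>u. Emap u = Emap v \<and> red S u w}"
    unfolding zig_nbrs_def using Emap_blue[OF assms(1)] by blast
next
  fix w
  assume "w \<in> {w. \<exists>u. Emap u = Emap v \<and> red S u w}"
  then obtain u where "Emap u = Emap v" "red S u w"
    by blast
  moreover have "snd u \<in> edges1 S"
    using \<open>red S u w\<close> by (rule red_edges1)
  ultimately show "w \<in> zig_nbrs S v"
    using Emap_eq_imp_eq_or_blue[OF assms] unfolding zig_nbrs_def by blast
qed

lemma red_nbrs_of_blue_pair_not_blue:
  assumes "comm_triplet S d" "blue S v v'" "red S v w" "red S v' w'"
  shows "\<not> blue S w w'"
proof
  assume "blue S w w'"
  obtain g a b where v: "v = (g, {a, b})" and e: "{a, b} \<in> edges1 S"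
    and v': "v' = (a + b + g, {- a, - b})"
    using assms(2) by (rule blueE)
  obtain h x y where w: "w = (h, {x, y})" and w': "w' = (x + y + h, {- x, - y})"
    using \<open>blue S w w'\<close> by (rule blueE)
  have "h = g" and adj: "walk_adj S {a, b} {x, y}"
    using assms(3) v w unfolding red_def by auto
  have "x + y + g = a + b + g"
    using assms(4) v' w' \<open>h = g\<close> unfolding red_def by simp
  then have "x + y = a + b"
    by simp
  moreover have "a + b = b + a"
    using assms(1) e by (rule comm_triplet_add_commute)
  moreover have "{x, y} \<inter> {a, b} \<noteq> {}"
    using walk_adj_Int_not_empty[OF adj] by blast
  ultimately have "{x, y} = {a, b}"
    by (intro doubleton_eq_if_add_eq)
  then show False
    using adj unfolding walk_adj_def by simp
qed

lemma inj_on_Emap_zig_nbrs: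
  assumes "two_complex S" "comm_triplet S d" "snd v \<in> edges1 S"
  shows "inj_on Emap (zig_nbrs S v)"
proof (rule inj_onI, rule ccontr)
  fix w1 w2
  assume w: "w1 \<in> zig_nbrs S v" "w2 \<in> zig_nbrs S v" "Emap w1 = Emap w2" "w1 \<noteq> w2"
  obtain v' where v': "blue S v v'"
    using assms(3) by (rule blue_exists)
  then have red12: "red S v w1 \<or> red S v' w1" "red S v w2 \<or> red S v' w2"
    using w(1,2) blue_unique[OF assms(2) v'] unfolding zig_nbrs_def by blast+
  then have "snd w1 \<in> edges1 S" "snd w2 \<in> edges1 S"
    by (meson red_edges1)+
  then have "w2 = w1 \<or> blue S w1 w2"
    using w(3) Emap_eq_imp_eq_or_blue[OF assms(2)] by simp
  then have blue12: "blue S w1 w2"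
    using w(4) by simp
  have blue21: "blue S w2 w1"
    using assms(2) blue12 by (rule blue_sym)
  have fst_neq: "fst w2 \<noteq> fst w1"
    using assms(1,2) blue12 by (rule blue_fst_neq)
  consider "red S v w1" "red S v w2" | "red S v' w1" "red S v' w2"
    | "red S v w1" "red S v' w2" | "red S v' w1" "red S v w2"
    using red12 by blast
  then show False
  proof cases
    case 1
    then show ?thesis using fst_neq by (simp add: red_fst)
  next
    case 2
    then show ?thesis using fst_neq by (simp add: red_fst)
  next
    case 3
    then show ?thesis using red_nbrs_of_blue_pair_not_blue[OF assms(2) v'] blue12 by blast
  next
    case 4
    then show ?thesis using red_nbrs_of_blue_pair_not_blue[OF assms(2) v'] blue21 by blast
  qed
qed

theorem mainTheorem9:
  fixes S :: "'a::group_add set set" and d :: nat and v :: "'a \<times> 'a set"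
  assumes "two_complex S"
    and "comm_triplet S d"
    and "v \<in> UNIV \<times> edges1 S"
  shows "bij_betw Emap (zig_nbrs S v) (walk_nbrs (Sc S) (Emap v))"
proof -
  have edge: "snd v \<in> edges1 S"
    using assms(3) by auto
  show ?thesis
    unfolding bij_betw_def walk_nbrs_Sc_Emap zig_nbrs_eq[OF assms(2) edge, symmetric]
    using inj_on_Emap_zig_nbrs[OF assms(1,2) edge] by simp
qed


end
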